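(* Consider an unlabeled tabletop rearrangement instance whose unlabeled dependency graph is the dependency grid $\mathcal{D}(m,2m)$, and any moment during the execution of a valid plan with external buffers. For a column index $i$ with $1\le i<m$, if $f_i+f_{i+1}\notin\{0,2m\}$, then $c_i+c_{i+1}\ge 1$.
   Context: An unlabeled tabletop rearrangement instance has congruent interchangeable objects, a feasible start arrangement and a feasible goal arrangement (no two placed footprints with intersecting interiors). Its unlabeled dependency graph is bipartite with a start vertex per start pose and a goal vertex per goal pose, adjacent iff footprints at those poses overlap. In a valid plan with external buffers each object is picked from its start pose exactly once and placed either at an unoccupied goal pose or into an external buffer (later moved from the buffer to an unoccupied goal pose); an object may be placed at a goal pose only if it overlaps no object currently in the workspace, so a goal vertex can be occupied only after the objects at all adjacent start vertices have been picked. The dependency grid $\mathcal{D}(w,h)$ has vertices $v_{x,y}$, $1\le x\le w$ (column), $1\le y\le h$ (row), with $v_{x,y}$, $v_{x',y'}$ adjacent iff $|x-x'|+|y-y'|=1$; $v_{x,y}$ is a start vertex if $x+y$ is even and a goal vertex otherwise. In $\mathcal{D}(m,2m)$ the vertex pair $p_{i,j}$ ($1\le i,j\le m$) is $\{v_{i,2j-1},v_{i,2j}\}$; it contains one start and one goal vertex. At a given moment, a goal vertex is filled if an object is placed at the corresponding goal pose; a start vertex is cleared if the object originally at it has been picked but the goal vertex in the same vertex pair is not filled. For column $i$, $f_i$ is the number of filled goal vertices and $c_i$ the number of cleared start vertices in column $i$. *)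

theory Defs
  imports Main
begin

type_synonym vtx = "nat \<times> nat"   (* (x, y) = (column, row) *)

definition in_grid :: "nat \<Rightarrow> vtx \<Rightarrow> bool" where
  "in_grid m v \<longleftrightarrow> 1 \<le> fst v \<and> fst v \<le> m \<and> 1 \<le> snd v \<and> snd v \<le> 2 * m"

definition start_v :: "nat \<Rightarrow> vtx \<Rightarrow> bool" where
  "start_v m v \<longleftrightarrow> in_grid m v \<and> even (fst v + snd v)"

definition goal_v :: "nat \<Rightarrow> vtx \<Rightarrow> bool" where
  "goal_v m v \<longleftrightarrow> in_grid m v \<and> odd (fst v + snd v)"

definition adj :: "vtx \<Rightarrow> vtx \<Rightarrow> bool" where
  "adj v w \<longleftrightarrow> \<bar>int (fst v) - int (fst w)\<bar> + \<bar>int (snd v) - int (snd w)\<bar> = 1"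

text \<open>Actions of a plan with external buffers (objects are unlabeled):
  pick the object at start vertex s and place it at goal vertex g;
  pick the object at start vertex s and put it into the buffer;
  move an object from the buffer to goal vertex g.\<close>
datatype action = ToGoal vtx vtx | ToBuffer vtx | FromBuffer vtx

text \<open>State: (picked start vertices, filled goal vertices, number of objects in the buffer).\<close>
type_synonym state = "vtx set \<times> vtx set \<times> nat"

fun step :: "nat \<Rightarrow> action \<Rightarrow> state \<Rightarrow> state option" where
  "step m (ToGoal s g) (P, F, b) =
     (if start_v m s \<and> s \<notin> P \<and> goal_v m g \<and> g \<notin> F
         \<and> (\<forall>t. start_v m t \<and> adj t g \<longrightarrow> t \<in> insert s P)
      then Some (insert s P, insert g F, b) else None)"
| "step m (ToBuffer s) (P, F, b) =
     (if start_v m s \<and> s \<notin> P then Some (insert s P, F, Suc b) else None)"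
| "step m (FromBuffer g) (P, F, b) =
     (if 0 < b \<and> goal_v m g \<and> g \<notin> F
         \<and> (\<forall>t. start_v m t \<and> adj t g \<longrightarrow> t \<in> P)
      then Some (P, insert g F, b - 1) else None)"

fun exec_from :: "nat \<Rightarrow> state \<Rightarrow> action list \<Rightarrow> state option" where
  "exec_from m st [] = Some st"
| "exec_from m st (a # as) =
     (case step m a st of None \<Rightarrow> None | Some st' \<Rightarrow> exec_from m st' as)"

definition init_state :: state where
  "init_state = ({}, {}, 0)"

definition valid_plan :: "nat \<Rightarrow> action list \<Rightarrow> bool" where
  "valid_plan m acts \<longleftrightarrow>
     exec_from m init_state acts = Some ({v. start_v m v}, {v. goal_v m v}, 0)"

text \<open>Partner of a vertex in its vertex pair p_{i,j} = {v_{i,2j-1}, v_{i,2j}}.\<close>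
definition partner :: "vtx \<Rightarrow> vtx" where
  "partner v = (if odd (snd v) then (fst v, snd v + 1) else (fst v, snd v - 1))"

definition filled_count :: "nat \<Rightarrow> vtx set \<Rightarrow> nat \<Rightarrow> nat" where
  "filled_count m F i = card {v. goal_v m v \<and> fst v = i \<and> v \<in> F}"

definition cleared_count :: "nat \<Rightarrow> vtx set \<Rightarrow> vtx set \<Rightarrow> nat \<Rightarrow> nat" where
  "cleared_count m P F i = card {v. start_v m v \<and> fst v = i \<and> v \<in> P \<and> partner v \<notin> F}"

end

theory Submission
  imports Defs
begin

text \<open>Every move into a goal vertex requires all adjacent start vertices to be picked, so along
  any execution each filled goal has all its neighbouring starts picked. Suppose no start vertex
  in columns \<open>i, i+1\<close> is cleared, i.e. every picked start there has the goal of its vertex pair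
  filled. Then a filled goal in these columns forces the goal of each adjacent start's pair to be
  filled, and these implications link the \<open>2m\<close> goals of the two columns into one cycle: upwards
  through the odd column, across at the top, downwards through the even column, across at the
  bottom. Hence either none or all of them are filled.\<close>

definition unblocked :: "nat \<Rightarrow> vtx set \<Rightarrow> vtx set \<Rightarrow> bool" where
  "unblocked m P F \<longleftrightarrow> (\<forall>g\<in>F. \<forall>t. start_v m t \<and> adj t g \<longrightarrow> t \<in> P)"

lemma step_preserves_unblocked:
  assumes "step m a (P, F, b) = Some (P', F', b')" and "unblocked m P F"
  shows "unblocked m P' F'"
  using assms by (cases a) (auto simp: unblocked_def split: if_splits)

lemma exec_from_preserves_unblocked:
  "exec_from m (P, F, b) as = Some (P', F', b') \<Longrightarrow> unblocked m P F \<Longrightarrow> unblocked m P' F'"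
proof (induction as arbitrary: P F b)
  case (Cons a as)
  then show ?case
    using step_preserves_unblocked by (fastforce split: option.splits)
qed simp

lemma exec_from_init_unblocked:
  "exec_from m init_state as = Some (P, F, b) \<Longrightarrow> unblocked m P F"
  unfolding init_state_def
  by (erule exec_from_preserves_unblocked) (simp add: unblocked_def)

definition column_goal :: "nat \<Rightarrow> nat \<Rightarrow> vtx" where
  "column_goal x j = (x, if odd x then 2 * j else 2 * j - 1)"

lemma inj_on_column_goal: "inj_on (column_goal x) {1..m}"
  by (auto simp: inj_on_def column_goal_def split: if_splits)

lemma goal_v_column_goal:
  "1 \<le> x \<Longrightarrow> x \<le> m \<Longrightarrow> j \<in> {1..m} \<Longrightarrow> goal_v m (column_goal x j)"
  by (cases "odd x") (auto simp: column_goal_def goal_v_def in_grid_def)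

lemma column_goals_eq:
  assumes "1 \<le> x" "x \<le> m"
  shows "{v. goal_v m v \<and> fst v = x} = column_goal x ` {1..m}"
proof (intro equalityI subsetI)
  fix v assume "v \<in> {v. goal_v m v \<and> fst v = x}"
  then obtain y where v: "v = (x, y)" "1 \<le> y" "y \<le> 2 * m" "odd (x + y)"
    by (cases v) (auto simp: goal_v_def in_grid_def)
  then have "v = column_goal x ((y + 1) div 2)" "(y + 1) div 2 \<in> {1..m}"
    by (auto simp: column_goal_def) presburger+
  then show "v \<in> column_goal x ` {1..m}" by blast
next
  fix v assume "v \<in> column_goal x ` {1..m}"
  then show "v \<in> {v. goal_v m v \<and> fst v = x}"
    using assms goal_v_column_goal by (auto simp: column_goal_def)
qed

lemma filled_count_eq_if_column_filled:
  assumes "1 \<le> x" "x \<le> m" and "column_goal x ` {1..m} \<subseteq> F"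
  shows "filled_count m F x = m"
proof -
  have "{v. goal_v m v \<and> fst v = x \<and> v \<in> F} = column_goal x ` {1..m}"
    using column_goals_eq[OF assms(1,2)] assms(3) by blast
  then show ?thesis
    using card_image[OF inj_on_column_goal, of x m] by (simp add: filled_count_def)
qed

lemma column_goal_filled_if_filled_count_pos:
  assumes "1 \<le> x" "x \<le> m" and "filled_count m F x \<noteq> 0"
  obtains j where "j \<in> {1..m}" "column_goal x j \<in> F"
proof -
  have "{v. goal_v m v \<and> fst v = x \<and> v \<in> F} \<noteq> {}"
    using assms(3) unfolding filled_count_def by (metis card.empty)
  then obtain v where "v \<in> {v. goal_v m v \<and> fst v = x}" "v \<in> F" by blast
  then obtain j where "j \<in> {1..m}" "v = column_goal x j"
    using column_goals_eq[OF assms(1,2)] by blast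
  then show thesis using that \<open>v \<in> F\<close> by simp
qed

lemma cleared_count_eq_0_iff:
  "cleared_count m P F x = 0 \<longleftrightarrow> (\<forall>v. start_v m v \<and> fst v = x \<and> v \<in> P \<longrightarrow> partner v \<in> F)"
proof -
  have "{v. start_v m v \<and> fst v = x \<and> v \<in> P \<and> partner v \<notin> F} \<subseteq> {1..m} \<times> {1..2 * m}"
    by (auto simp: start_v_def in_grid_def)
  then have "finite {v. start_v m v \<and> fst v = x \<and> v \<in> P \<and> partner v \<notin> F}"
    by (rule finite_subset) simp
  then show ?thesis
    unfolding cleared_count_def by (simp; blast)
qed

locale uncleared_column_pair =
  fixes m u d :: nat and P F :: "vtx set"
  assumes unblocked: "unblocked m P F"
    and uncleared: "\<And>v. start_v m v \<Longrightarrow> fst v \<in> {u, d} \<Longrightarrow> v \<in> P \<Longrightarrow> partner v \<in> F"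
    and odd_u: "odd u"
    and adjacent: "d = Suc u \<or> u = Suc d"
    and u_le: "u \<le> m" and d_pos: "1 \<le> d" and d_le: "d \<le> m"
begin

lemma u_pos: "1 \<le> u"
  using odd_u by (cases u) auto

lemma even_d: "even d"
  using odd_u adjacent by auto

lemma column_goal_u: "column_goal u j = (u, 2 * j)"
  using odd_u by (simp add: column_goal_def)

lemma column_goal_d: "column_goal d j = (d, 2 * j - 1)"
  using even_d by (simp add: column_goal_def)

lemma partner_filled:
  assumes "start_v m t" "fst t \<in> {u, d}" "adj t g" "g \<in> F"
  shows "partner t \<in> F"
proof -
  have "t \<in> P" using assms(1,3,4) unblocked unfolding unblocked_def by blast
  then show ?thesis using uncleared assms(1,2) by blast
qed

lemma filled_u_imp_filled_d:
  assumes "j \<in> {1..m}" "column_goal u j \<in> F"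
  shows "column_goal d j \<in> F"
  using partner_filled[of "(d, 2 * j)" "(u, 2 * j)"] assms adjacent even_d d_pos d_le
  by (auto simp: column_goal_u column_goal_d start_v_def in_grid_def adj_def partner_def)

lemma filled_d_imp_filled_u:
  assumes "j \<in> {1..m}" "column_goal d j \<in> F"
  shows "column_goal u j \<in> F"
proof -
  have "start_v m (u, 2 * j - 1)" "partner (u, 2 * j - 1) = (u, 2 * j)"
    using assms(1) odd_u u_pos u_le by (auto simp: start_v_def in_grid_def partner_def)
  then show ?thesis
    using partner_filled[of "(u, 2 * j - 1)" "(d, 2 * j - 1)"] assms adjacent
    by (auto simp: column_goal_u column_goal_d adj_def)
qed

lemma filled_u_imp_filled_u_Suc:
  assumes "1 \<le> j" "j < m" "column_goal u j \<in> F"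
  shows "column_goal u (Suc j) \<in> F"
  using partner_filled[of "(u, 2 * j + 1)" "(u, 2 * j)"] assms odd_u u_pos u_le
  by (auto simp: column_goal_u start_v_def in_grid_def adj_def partner_def)

lemma filled_d_Suc_imp_filled_d:
  assumes "1 \<le> j" "j < m" "column_goal d (Suc j) \<in> F"
  shows "column_goal d j \<in> F"
  using partner_filled[of "(d, 2 * j)" "(d, 2 * j + 1)"] assms even_d d_pos d_le
  by (auto simp: column_goal_d start_v_def in_grid_def adj_def partner_def)

lemma filled_u_upwards:
  assumes "1 \<le> j" "j \<le> k" "k \<le> m" "column_goal u j \<in> F"
  shows "column_goal u k \<in> F"
  using assms(2,3)
proof (induction k rule: dec_induct)
  case base show ?case by (fact assms(4))
next
  case (step n)
  then show ?case using filled_u_imp_filled_u_Suc assms(1) by simp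
qed

lemma filled_d_downwards:
  assumes "1 \<le> k" "k \<le> j" "j \<le> m" "column_goal d j \<in> F"
  shows "column_goal d k \<in> F"
  using assms(2,1,3)
proof (induction k rule: inc_induct)
  case base show ?case by (fact assms(4))
next
  case (step n)
  then show ?case using filled_d_Suc_imp_filled_d by simp
qed

lemma all_column_goals_filled:
  assumes "x \<in> {u, d}" "j \<in> {1..m}" "column_goal x j \<in> F"
  shows "column_goal u ` {1..m} \<subseteq> F" and "column_goal d ` {1..m} \<subseteq> F"
proof -
  have m_pos: "1 \<le> m" using assms(2) by simp
  have "column_goal d 1 \<in> F"
  proof (cases "x = u")
    case True
    then have "column_goal u m \<in> F" using filled_u_upwards[of j m] assms by simp
    then have "column_goal d m \<in> F" using filled_u_imp_filled_d m_pos by simp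
    then show ?thesis using filled_d_downwards[of 1 m] m_pos by simp
  next
    case False
    then show ?thesis using filled_d_downwards[of 1 j] assms by simp
  qed
  then have u_1: "column_goal u 1 \<in> F" using filled_d_imp_filled_u m_pos by simp
  then have "column_goal u m \<in> F" using filled_u_upwards[of 1 m] m_pos by simp
  then have d_m: "column_goal d m \<in> F" using filled_u_imp_filled_d m_pos by simp
  show "column_goal u ` {1..m} \<subseteq> F"
    using filled_u_upwards[of 1] u_1 by auto
  show "column_goal d ` {1..m} \<subseteq> F"
    using filled_d_downwards[of _ m] d_m by auto
qed

lemma filled_count_sum_cases:
  "filled_count m F u + filled_count m F d \<in> {0, 2 * m}"
proof (cases "filled_count m F u = 0 \<and> filled_count m F d = 0")
  case False
  then obtain x where x: "x \<in> {u, d}" "filled_count m F x \<noteq> 0" by auto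
  then have "1 \<le> x" "x \<le> m" using u_pos u_le d_pos d_le by auto
  then obtain j where "j \<in> {1..m}" "column_goal x j \<in> F"
    by (rule column_goal_filled_if_filled_count_pos[OF _ _ x(2)])
  then have "filled_count m F u = m" "filled_count m F d = m"
    using all_column_goals_filled[OF x(1)] filled_count_eq_if_column_filled
      u_pos u_le d_pos d_le by simp_all
  then show ?thesis by simp
qed simp

end

theorem lemma3:
  fixes m i k :: nat and acts :: "action list" and P F :: "vtx set" and b :: nat
  assumes "valid_plan m acts"
    and "k \<le> length acts"
    and "exec_from m init_state (take k acts) = Some (P, F, b)"
    and "1 \<le> i" and "i < m"
    and "filled_count m F i + filled_count m F (Suc i) \<notin> {0, 2 * m}"
  shows "cleared_count m P F i + cleared_count m P F (Suc i) \<ge> 1"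
proof (rule ccontr)
  assume "\<not> ?thesis"
  then have "cleared_count m P F i = 0" "cleared_count m P F (Suc i) = 0" by simp_all
  then have uncleared: "partner v \<in> F" if "start_v m v" "fst v \<in> {i, Suc i}" "v \<in> P" for v
    using that unfolding cleared_count_eq_0_iff by blast
  obtain u d where ud: "{u, d} = {i, Suc i}" "odd u" "d = Suc u \<or> u = Suc d"
    by (cases "odd i") (auto intro: that[of i "Suc i"] that[of "Suc i" i])
  then interpret uncleared_column_pair m u d P F
    using exec_from_init_unblocked[OF assms(3)] uncleared assms(4,5)
    by unfold_locales (auto simp: doubleton_eq_iff)
  have "filled_count m F i + filled_count m F (Suc i) = filled_count m F u + filled_count m F d"
    using ud(1) by (auto simp: doubleton_eq_iff)
  then show False
    using filled_count_sum_cases assms(6) by simp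
qed

end
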